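(* Let $m\ge 3$ be an integer and let $n=2^m-1$. Let $\phi\in\mathbb{R}$ with binary expansion $\phi=2\pi\times 0.b_0b_1b_2\ldots$ (i.e. $\phi=\sum_{k\ge 0} b_k\,2\pi/2^{k+1}$, $b_k\in\{0,1\}$), and set $\phi_m=2^{m-1}\phi$ (so that, modulo $2\pi$, $\phi_m=2\pi\times 0.b_{m-1}b_mb_{m+1}\ldots$). Let $\alpha|0_L\rangle+\beta|1_L\rangle$ be any logical state of the code $\mathrm{QRM}(1,m)$. Apply $R_z(-\phi)$ transversally, i.e. apply $R_z(-\phi)^{\otimes n}$, and postselect on all stabilizer syndrome measurements ($X$-type and $Z$-type) giving the accepting outcome $+1$, i.e. apply the code-space projector $P_{+1}$. Then the resulting state is, up to normalization and a global phase, the logical state obtained by a logical rotation by the angle $$\phi'=\phi-2\arctan\left(\frac{\sin(\phi_m)}{(2^m-1)+\cos(\phi_m)}\right)$$ about the $Z$ axis, namely $\alpha|0_L\rangle+e^{i\phi'}\beta|1_L\rangle$.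
   Context: $Z=|0\rangle\langle0|-|1\rangle\langle1|$ and $R_z(\theta)=\exp(-i\theta Z/2)$. Classical first-order Reed–Muller code $\mathrm{RM}(1,m)$: binary code of length $2^m$ whose codewords are the truth tables (value lists over all $x\in\{0,1\}^m$) of affine Boolean functions $a_0+a_1x_1+\dots+a_mx_m$. The shortened code $\overline{\mathrm{RM}}(1,m)$ is obtained by keeping the codewords of $\mathrm{RM}(1,m)$ whose first coordinate (the value at $x=0$) is $0$ and deleting that coordinate; it has length $2^m-1$, one codeword of weight $0$ and $2^m-1$ codewords of weight $2^{m-1}$. The punctured code $\mathrm{RM}^*(1,m)$ is the code of length $2^m-1$ generated by $\overline{\mathrm{RM}}(1,m)$ together with the all-ones vector $\mathbf{1}$. The quantum Reed–Muller code $\mathrm{QRM}(1,m)$ is the CSS code on $n=2^m-1$ qubits with logical basis states $|x_L\rangle\propto\sum_{y\in\overline{\mathrm{RM}}(1,m)}|y+x\mathbf{1}\rangle$ for $x\in\{0,1\}$ (addition mod 2). Its $X$-type stabilizer generators $S^X_1,\dots,S^X_m$ are $X^{g_i}=\bigotimes_k X^{(g_i)_k}$ for a basis $g_1,\dots,g_m$ of $\overline{\mathrm{RM}}(1,m)$; its $Z$-type stabilizer generators $S^Z_1,\dots,S^Z_{2^m-m-2}$ are $Z^{h}$ for the rows $h$ of a parity-check matrix of $\mathrm{RM}^*(1,m)$. The code-space projector is $P_{+1}=\prod_{i}\frac{I+S^Z_i}{2}\prod_{i=1}^m\frac{I+S^X_i}{2}$. *)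

theory Defs
  imports Complex_Main
begin

text \<open>A binary vector of length L is represented by the set of
positions (in {0..<L}) where it has entry 1; addition mod 2 is symmetric
difference.  An n-qubit state is a function from computational basis labels
(subsets of {0..<n}, i.e. bit strings) to complex amplitudes.\<close>

definition qrm_n :: "nat \<Rightarrow> nat" where
  "qrm_n m = 2 ^ m - 1"

text \<open>Truth table of affine Boolean functions a0 + a_1 x_1 + ... + a_m x_m over
x in {0,1}^m; the point x is identified with the integer whose i-th binary
digit is x_(i+1); positions are listed in the natural order 0..2^m-1.\<close>
definition rm1 :: "nat \<Rightarrow> nat set set" where
  "rm1 m = {{x \<in> {0..<2 ^ m}. odd (of_bool a0 + (\<Sum>i<m. of_bool (a i) * (x div 2 ^ i mod 2)) :: nat)}
            | a0 a. True}"

definition rm1_short :: "nat \<Rightarrow> nat set set" where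
  "rm1_short m = {(\<lambda>x. x - 1) ` c | c. c \<in> rm1 m \<and> 0 \<notin> c}"

definition xsum :: "nat set set \<Rightarrow> nat set" where
  "xsum F = {k. odd (card {g \<in> F. k \<in> g})}"

definition gf2_span :: "nat set set \<Rightarrow> nat set set" where
  "gf2_span A = {xsum F | F. finite F \<and> F \<subseteq> A}"

definition rm1_punct :: "nat \<Rightarrow> nat set set" where
  "rm1_punct m = gf2_span (rm1_short m \<union> {{0..<qrm_n m}})"

definition ket0L :: "nat \<Rightarrow> nat set \<Rightarrow> complex" where
  "ket0L m S = (if S \<in> rm1_short m then 1 / sqrt (real (card (rm1_short m))) else 0)"

definition ket1L :: "nat \<Rightarrow> nat set \<Rightarrow> complex" where
  "ket1L m S = (if S \<in> {y \<union> {0..<qrm_n m} - (y \<inter> {0..<qrm_n m}) | y. y \<in> rm1_short m}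
                then 1 / sqrt (real (card (rm1_short m))) else 0)"

definition Xop :: "nat set \<Rightarrow> (nat set \<Rightarrow> complex) \<Rightarrow> (nat set \<Rightarrow> complex)" where
  "Xop g \<psi> = (\<lambda>S. \<psi> ((S - g) \<union> (g - S)))"

definition Zop :: "nat set \<Rightarrow> (nat set \<Rightarrow> complex) \<Rightarrow> (nat set \<Rightarrow> complex)" where
  "Zop h \<psi> = (\<lambda>S. (-1) ^ card (S \<inter> h) * \<psi> S)"

definition stab_proj :: "((nat set \<Rightarrow> complex) \<Rightarrow> (nat set \<Rightarrow> complex)) \<Rightarrow>
    (nat set \<Rightarrow> complex) \<Rightarrow> (nat set \<Rightarrow> complex)" where
  "stab_proj U \<psi> = (\<lambda>S. (\<psi> S + U \<psi> S) / 2)"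

definition code_proj :: "nat set list \<Rightarrow> nat set list \<Rightarrow>
    (nat set \<Rightarrow> complex) \<Rightarrow> (nat set \<Rightarrow> complex)" where
  "code_proj gs hs \<psi> =
     foldr (\<lambda>h. stab_proj (Zop h)) hs (foldr (\<lambda>g. stab_proj (Xop g)) gs \<psi>)"

definition is_X_generators :: "nat \<Rightarrow> nat set list \<Rightarrow> bool" where
  "is_X_generators m gs \<longleftrightarrow> length gs = m \<and> gf2_span (set gs) = rm1_short m"

text \<open>Z-type generators: the rows of a parity-check matrix of the punctured code
(2^m - m - 2 rows whose common kernel is exactly the code).\<close>
definition is_Z_generators :: "nat \<Rightarrow> nat set list \<Rightarrow> bool" where
  "is_Z_generators m hs \<longleftrightarrow> length hs = 2 ^ m - m - 2 \<and>
     (\<forall>h \<in> set hs. h \<subseteq> {0..<qrm_n m}) \<and>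
     (\<forall>y. y \<subseteq> {0..<qrm_n m} \<longrightarrow>
        (y \<in> rm1_punct m \<longleftrightarrow> (\<forall>h \<in> set hs. even (card (y \<inter> h)))))"

definition rz_transversal :: "nat \<Rightarrow> real \<Rightarrow> (nat set \<Rightarrow> complex) \<Rightarrow> (nat set \<Rightarrow> complex)" where
  "rz_transversal m \<theta> \<psi> = (\<lambda>S. (\<Prod>k<qrm_n m.
       if k \<in> S then exp (\<i> * of_real (\<theta> / 2)) else exp (- \<i> * of_real (\<theta> / 2))) * \<psi> S)"

end

theory Submission
  imports Defs
begin

text \<open>Write R for the shortened code and U for the all-ones word, so that the logical basis
states are the uniform superpositions over R and over the coset U + R. The transversal rotation
multiplies a basis state y by a phase depending only on the weight of y, and complementing y
conjugates that phase. The X-stabilizer part of the code projector averages over translates by R,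
so it maps each coset superposition to itself times the sum of the phases over the coset: z over R
and cnj z over U + R. The Z-stabilizer part fixes both cosets, which lie in the punctured code.
Since R has one word of weight 0 and 2^m - 1 words of weight 2^(m-1),
z = e^(-i phi/2) (n + e^(i phi_m)); as n + cos phi_m > 0, the argument of n + e^(i phi_m) is
arctan (sin phi_m / (n + cos phi_m)), so cnj z / z = e^(i phi').\<close>

definition rm_linear_form :: "nat \<Rightarrow> (nat \<Rightarrow> bool) \<Rightarrow> nat \<Rightarrow> nat" where
  "rm_linear_form m a x = (\<Sum>i<m. of_bool (a i) * (x div 2 ^ i mod 2))"

lemma nat_div_power_mod_2: "(x::nat) div 2 ^ i mod 2 = of_bool (bit x i)"
  by (simp add: bit_iff_odd odd_iff_mod_2_eq_one)

lemma odd_rm_linear_form_flip_bit: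
  assumes "j < m" "a j"
  shows "odd (rm_linear_form m a (flip_bit j x)) \<longleftrightarrow> even (rm_linear_form m a x)"
proof -
  have split: "rm_linear_form m a y = y div 2 ^ j mod 2
      + (\<Sum>i\<in>{..<m} - {j}. of_bool (a i) * (y div 2 ^ i mod 2))" for y
    unfolding rm_linear_form_def using assms by (subst sum.remove[of _ j]) auto
  have "(\<Sum>i\<in>{..<m} - {j}. of_bool (a i) * (flip_bit j x div 2 ^ i mod 2))
      = (\<Sum>i\<in>{..<m} - {j}. of_bool (a i) * (x div 2 ^ i mod 2))"
    by (rule sum.cong) (auto simp: nat_div_power_mod_2 bit_flip_bit_iff)
  then show ?thesis
    unfolding split[of "flip_bit j x"] split[of x]
    by (auto simp: nat_div_power_mod_2 bit_flip_bit_iff)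
qed

lemma card_odd_rm_linear_form:
  assumes "j < m" "a j"
  shows "card {x \<in> {..<2 ^ m}. odd (rm_linear_form m a x)} = 2 ^ (m - 1)"
proof -
  let ?O = "{x \<in> {..<2 ^ m}. odd (rm_linear_form m a x)}"
  let ?E = "{x \<in> {..<2 ^ m}. even (rm_linear_form m a x)}"
  have flip_flip: "flip_bit j (flip_bit j x) = x" for x :: nat
    by (rule bit_eqI) (auto simp: bit_flip_bit_iff)
  have flip_less: "flip_bit j x < 2 ^ m \<longleftrightarrow> x < 2 ^ m" for x :: nat
    using assms(1) by (metis flip_flip take_bit_flip_bit_eq take_bit_nat_eq_self_iff not_le)
  have parity: "even (rm_linear_form m a (flip_bit j x)) \<longleftrightarrow> odd (rm_linear_form m a x)" for x
    using odd_rm_linear_form_flip_bit[of j m a x] assms by blast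
  have "bij_betw (flip_bit j) ?O ?E"
    by (rule bij_betw_byWitness[where f' = "flip_bit j"])
      (auto simp: flip_flip flip_less parity)
  then have "card ?O = card ?E"
    by (rule bij_betw_same_card)
  moreover have "card ?O + card ?E = card (?O \<union> ?E)"
    by (rule card_Un_disjoint[symmetric]) auto
  moreover have "?O \<union> ?E = {..<2 ^ m}"
    by auto
  moreover have "(2::nat) ^ m = 2 * 2 ^ (m - 1)"
    using assms(1) by (cases m) auto
  ultimately show ?thesis
    by simp
qed

definition shortened_rm_word :: "nat \<Rightarrow> (nat \<Rightarrow> bool) \<Rightarrow> nat set" where
  "shortened_rm_word m a = {k. k < 2 ^ m - 1 \<and> odd (rm_linear_form m a (Suc k))}"

lemma Suc_image_shortened_rm_word:
  "Suc ` shortened_rm_word m a = {x \<in> {..<2 ^ m}. odd (rm_linear_form m a x)}"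
proof (intro equalityI subsetI)
  fix x assume x: "x \<in> {x \<in> {..<2 ^ m}. odd (rm_linear_form m a x)}"
  moreover have "rm_linear_form m a 0 = 0"
    by (simp add: rm_linear_form_def)
  ultimately obtain k where "x = Suc k"
    by (cases x) auto
  with x show "x \<in> Suc ` shortened_rm_word m a"
    unfolding shortened_rm_word_def by auto
qed (auto simp: shortened_rm_word_def)

lemma shortened_rm_word_eq_image:
  "shortened_rm_word m a = (\<lambda>x. x - 1) ` {x \<in> {0..<2 ^ m}. odd (rm_linear_form m a x)}"
  unfolding atLeast0LessThan Suc_image_shortened_rm_word[symmetric] by (simp add: image_image)

lemma rm1_short_eq_range: "rm1_short m = range (shortened_rm_word m)"
proof -
  let ?c = "\<lambda>a0 a. {x \<in> {0..<2 ^ m}. odd (of_bool a0 + rm_linear_form m a x)}"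
  have rm1: "rm1 m = {?c a0 a | a0 a. True}"
    unfolding rm1_def rm_linear_form_def ..
  have zero: "0 \<in> ?c a0 a \<longleftrightarrow> a0" for a0 a
    by (simp add: rm_linear_form_def)
  show ?thesis
  proof (intro equalityI subsetI)
    fix y assume "y \<in> rm1_short m"
    then obtain a0 a where "y = (\<lambda>x. x - 1) ` ?c a0 a" "0 \<notin> ?c a0 a"
      unfolding rm1_short_def rm1 by blast
    then show "y \<in> range (shortened_rm_word m)"
      unfolding zero by (simp add: shortened_rm_word_eq_image)
  next
    fix y assume "y \<in> range (shortened_rm_word m)"
    then obtain a where "y = (\<lambda>x. x - 1) ` ?c False a"
      by (auto simp: shortened_rm_word_eq_image)
    then show "y \<in> rm1_short m"
      unfolding rm1_short_def rm1 using zero[of False a] by blast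
  qed
qed

lemma shortened_rm_word_sym_diff:
  "sym_diff (shortened_rm_word m a) (shortened_rm_word m b)
     = shortened_rm_word m (\<lambda>i. a i \<noteq> b i)"
proof -
  have sum_eq: "rm_linear_form m a x + rm_linear_form m b x
      = rm_linear_form m (\<lambda>i. a i \<noteq> b i) x + 2 * rm_linear_form m (\<lambda>i. a i \<and> b i) x" for x
    unfolding rm_linear_form_def sum.distrib[symmetric] sum_distrib_left
    by (rule sum.cong) auto
  have "odd (rm_linear_form m (\<lambda>i. a i \<noteq> b i) x)
      \<longleftrightarrow> odd (rm_linear_form m a x) \<noteq> odd (rm_linear_form m b x)" for x
  proof -
    have "even (rm_linear_form m a x + rm_linear_form m b x)
        \<longleftrightarrow> even (rm_linear_form m (\<lambda>i. a i \<noteq> b i) x)"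
      unfolding sum_eq by simp
    then show ?thesis
      by simp
  qed
  then show ?thesis
    unfolding shortened_rm_word_def by auto
qed

lemma card_shortened_rm_word:
  assumes "j < m" "a j"
  shows "card (shortened_rm_word m a) = 2 ^ (m - 1)"
  using card_odd_rm_linear_form[of j m a] assms
  unfolding Suc_image_shortened_rm_word[symmetric] by (simp add: card_image)

lemma shortened_rm_word_eq_empty_iff:
  "shortened_rm_word m a = {} \<longleftrightarrow> (\<forall>i<m. \<not> a i)"
proof
  assume "shortened_rm_word m a = {}"
  then show "\<forall>i<m. \<not> a i"
    using card_shortened_rm_word by fastforce
next
  assume "\<forall>i<m. \<not> a i"
  then show "shortened_rm_word m a = {}"
    by (simp add: shortened_rm_word_def rm_linear_form_def)
qed

lemma card_rm1_short: "card (rm1_short m) = 2 ^ m"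
proof -
  let ?word = "\<lambda>A. shortened_rm_word m (\<lambda>i. i \<in> A)"
  have "shortened_rm_word m a = ?word {i. i < m \<and> a i}" for a
    unfolding shortened_rm_word_def rm_linear_form_def
    by (intro Collect_cong conj_cong refl arg_cong[where f = odd] sum.cong) auto
  then have "rm1_short m = ?word ` Pow {..<m}"
    unfolding rm1_short_eq_range by blast
  moreover have "inj_on ?word (Pow {..<m})"
  proof (rule inj_onI)
    fix A B assume "A \<in> Pow {..<m}" "B \<in> Pow {..<m}" "?word A = ?word B"
    then have "\<forall>i<m. (i \<in> A) = (i \<in> B)"
      using shortened_rm_word_eq_empty_iff[of m "\<lambda>i. (i \<in> A) \<noteq> (i \<in> B)"]
      unfolding shortened_rm_word_sym_diff[symmetric] by simp
    then show "A = B"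
      using \<open>A \<in> Pow {..<m}\<close> \<open>B \<in> Pow {..<m}\<close> by auto
  qed
  ultimately show ?thesis
    by (simp add: card_image card_Pow)
qed

lemma finite_rm1_short: "finite (rm1_short m)"
  using card_rm1_short by (metis card_ge_0_finite zero_less_power zero_less_numeral)

lemma empty_in_rm1_short: "{} \<in> rm1_short m"
proof -
  have "shortened_rm_word m (\<lambda>_. False) = {}"
    by (simp add: shortened_rm_word_eq_empty_iff)
  then show ?thesis
    unfolding rm1_short_eq_range by (metis rangeI)
qed

lemma rm1_short_subset: "y \<in> rm1_short m \<Longrightarrow> y \<subseteq> {0..<qrm_n m}"
  unfolding rm1_short_eq_range qrm_n_def shortened_rm_word_def by auto

lemma card_rm1_short_word: "y \<in> rm1_short m \<Longrightarrow> y \<noteq> {} \<Longrightarrow> card y = 2 ^ (m - 1)"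
  unfolding rm1_short_eq_range
  using shortened_rm_word_eq_empty_iff card_shortened_rm_word by blast

lemma sym_diff_in_rm1_short:
  "y \<in> rm1_short m \<Longrightarrow> z \<in> rm1_short m \<Longrightarrow> sym_diff y z \<in> rm1_short m"
  unfolding rm1_short_eq_range by (auto simp: shortened_rm_word_sym_diff)

lemma sum_rm1_short_card:
  fixes f :: "nat \<Rightarrow> 'a::semiring_1"
  shows "(\<Sum>y\<in>rm1_short m. f (card y)) = f 0 + of_nat (2 ^ m - 1) * f (2 ^ (m - 1))"
proof -
  have "(\<Sum>y\<in>rm1_short m. f (card y)) = f 0 + (\<Sum>y\<in>rm1_short m - {{}}. f (card y))"
    using sum.remove[OF finite_rm1_short empty_in_rm1_short, of "\<lambda>y. f (card y)"] by simp
  also have "(\<Sum>y\<in>rm1_short m - {{}}. f (card y)) = (\<Sum>y\<in>rm1_short m - {{}}. f (2 ^ (m - 1)))"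
    by (rule sum.cong) (simp_all add: card_rm1_short_word[of _ m])
  finally show ?thesis
    by (simp add: finite_rm1_short empty_in_rm1_short card_rm1_short)
qed

lemma full_not_in_rm1_short:
  assumes "m \<ge> 2"
  shows "{0..<qrm_n m} \<notin> rm1_short m"
proof
  assume full: "{0..<qrm_n m} \<in> rm1_short m"
  have "(2::nat) ^ m = 2 * 2 ^ (m - 1)"
    using assms by (cases m) auto
  moreover have "(2::nat) ^ (m - 1) \<ge> 2 ^ 1"
    using assms by (intro power_increasing) auto
  ultimately show False
    using card_rm1_short_word[OF full] unfolding qrm_n_def by auto
qed

lemma xsum_insert:
  assumes "finite F" "g \<notin> F"
  shows "xsum (insert g F) = sym_diff (xsum F) g"
proof -
  have "odd (card {h \<in> insert g F. k \<in> h}) \<longleftrightarrow> odd (card {h \<in> F. k \<in> h}) \<noteq> (k \<in> g)" for k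
  proof (cases "k \<in> g")
    case True
    then have "{h \<in> insert g F. k \<in> h} = insert g {h \<in> F. k \<in> h}"
      by auto
    with True assms show ?thesis
      by simp
  next
    case False
    then have "{h \<in> insert g F. k \<in> h} = {h \<in> F. k \<in> h}"
      by auto
    with False show ?thesis
      by simp
  qed
  then show ?thesis
    unfolding xsum_def by auto
qed

lemma xsum_singleton: "xsum {g} = g"
  using xsum_insert[of "{}" g] by (simp add: xsum_def)

lemma rm1_short_subset_rm1_punct: "rm1_short m \<subseteq> rm1_punct m"
proof
  fix y assume "y \<in> rm1_short m"
  then have "y = xsum {y} \<and> finite {y} \<and> {y} \<subseteq> rm1_short m \<union> {{0..<qrm_n m}}"
    by (simp add: xsum_singleton)
  then show "y \<in> rm1_punct m"
    unfolding rm1_punct_def gf2_span_def by blast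
qed

lemma sym_diff_full_in_rm1_punct:
  assumes "m \<ge> 2" "y \<in> rm1_short m"
  shows "sym_diff y {0..<qrm_n m} \<in> rm1_punct m"
proof -
  let ?U = "{0..<qrm_n m}"
  have "y \<noteq> ?U"
    using assms full_not_in_rm1_short by blast
  then have "xsum {y, ?U} = sym_diff y ?U"
    by (simp add: xsum_insert xsum_singleton Un_commute)
  then show ?thesis
    unfolding rm1_punct_def gf2_span_def using assms(2) by blast
qed

lemma X_generators_basis:
  assumes "is_X_generators m gs"
  shows "distinct gs" and "bij_betw xsum (Pow (set gs)) (rm1_short m)"
proof -
  have len: "length gs = m" and span: "gf2_span (set gs) = rm1_short m"
    using assms unfolding is_X_generators_def by auto
  have span_image: "xsum ` Pow (set gs) = rm1_short m"
    unfolding span[symmetric] gf2_span_def using finite_subset by fastforce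
  have "2 ^ m = card (xsum ` Pow (set gs))"
    by (simp add: span_image card_rm1_short)
  also have "\<dots> \<le> card (Pow (set gs))"
    by (rule card_image_le) simp
  also have "\<dots> = 2 ^ card (set gs)"
    by (simp add: card_Pow)
  finally have "m \<le> card (set gs)"
    by simp
  with card_length[of gs] len have card: "card (set gs) = m"
    by simp
  then show "distinct gs"
    using len by (simp add: card_distinct)
  have "card (xsum ` Pow (set gs)) = card (Pow (set gs))"
    unfolding span_image card_rm1_short using card by (simp add: card_Pow)
  then have "inj_on xsum (Pow (set gs))"
    by (simp only: inj_on_iff_eq_card finite_Pow_iff finite_set)
  with span_image show "bij_betw xsum (Pow (set gs)) (rm1_short m)"
    unfolding bij_betw_def by blast
qed

lemma foldr_stab_proj_Xop:
  assumes "distinct gs"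
  shows "foldr (\<lambda>g. stab_proj (Xop g)) gs \<psi> S
      = (\<Sum>F\<in>Pow (set gs). \<psi> (sym_diff S (xsum F))) / 2 ^ length gs"
  using assms
proof (induction gs arbitrary: S)
  case Nil
  then show ?case
    by (simp add: xsum_def)
next
  case (Cons g gs)
  let ?G = "set gs" and ?f = "\<lambda>S F. \<psi> (sym_diff S (xsum F))"
  have g: "g \<notin> ?G" and "distinct gs"
    using Cons.prems by auto
  have "(\<Sum>F\<in>insert g ` Pow ?G. ?f S F) = (\<Sum>F\<in>Pow ?G. ?f (sym_diff S g) F)"
  proof (subst sum.reindex)
    show "inj_on (insert g) (Pow ?G)"
      using g by (auto simp: inj_on_def)
    show "sum (?f S \<circ> insert g) (Pow ?G) = (\<Sum>F\<in>Pow ?G. ?f (sym_diff S g) F)"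
    proof (rule sum.cong)
      fix F assume "F \<in> Pow ?G"
      then have "xsum (insert g F) = sym_diff (xsum F) g"
        using g by (intro xsum_insert) (auto intro: finite_subset)
      moreover have "sym_diff S (sym_diff (xsum F) g) = sym_diff (sym_diff S g) (xsum F)"
        by blast
      ultimately show "(?f S \<circ> insert g) F = ?f (sym_diff S g) F"
        by (simp only: comp_apply)
    qed simp
  qed
  then have "(\<Sum>F\<in>Pow (set (g # gs)). ?f S F)
      = (\<Sum>F\<in>Pow ?G. ?f S F) + (\<Sum>F\<in>Pow ?G. ?f (sym_diff S g) F)"
    using g by (simp only: list.set Pow_insert, subst sum.union_disjoint) auto
  then show ?case
    using Cons.IH[OF \<open>distinct gs\<close>]
    by (simp add: stab_proj_def Xop_def add_divide_distrib mult.commute)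
qed

lemma foldr_stab_proj_Zop:
  "foldr (\<lambda>h. stab_proj (Zop h)) hs \<psi> S
     = (if \<forall>h\<in>set hs. even (card (S \<inter> h)) then \<psi> S else 0)"
  by (induction hs) (auto simp: stab_proj_def Zop_def)

lemma code_proj_eq_average:
  assumes "is_X_generators m gs"
  shows "code_proj gs hs \<psi> S = (if \<forall>h\<in>set hs. even (card (S \<inter> h))
      then (\<Sum>y\<in>rm1_short m. \<psi> (sym_diff S y)) / 2 ^ m else 0)"
proof -
  have "length gs = m"
    using assms unfolding is_X_generators_def by simp
  moreover have "(\<Sum>F\<in>Pow (set gs). \<psi> (sym_diff S (xsum F))) = (\<Sum>y\<in>rm1_short m. \<psi> (sym_diff S y))"
    using X_generators_basis(2)[OF assms] by (rule sum.reindex_bij_betw)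
  ultimately show ?thesis
    unfolding code_proj_def foldr_stab_proj_Zop foldr_stab_proj_Xop[OF X_generators_basis(1)[OF assms]]
    by simp
qed

lemma sum_sym_diff_coset:
  fixes R :: "'a set set" and x S :: "'a set"
  assumes closed: "\<And>y z. y \<in> R \<Longrightarrow> z \<in> R \<Longrightarrow> sym_diff y z \<in> R"
  defines "C \<equiv> (\<lambda>y. sym_diff y x) ` R"
  shows "(\<Sum>y\<in>R. if sym_diff S y \<in> C then f (sym_diff S y) else 0)
      = (if S \<in> C then \<Sum>c\<in>C. f c else 0)"
proof (cases "S \<in> C")
  case True
  then obtain z where "z \<in> R" and S: "S = sym_diff z x"
    unfolding C_def by blast
  have to_C: "sym_diff S y \<in> C" if "y \<in> R" for y
  proof -
    have "sym_diff S y = sym_diff (sym_diff z y) x"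
      unfolding S by blast
    with closed[OF \<open>z \<in> R\<close> \<open>y \<in> R\<close>] show ?thesis
      unfolding C_def by blast
  qed
  have to_R: "sym_diff S c \<in> R" if "c \<in> C" for c
  proof -
    obtain w where "w \<in> R" "c = sym_diff w x"
      using \<open>c \<in> C\<close> unfolding C_def by blast
    then have "sym_diff S c = sym_diff z w"
      unfolding S by blast
    with closed[OF \<open>z \<in> R\<close> \<open>w \<in> R\<close>] show ?thesis
      by simp
  qed
  have "bij_betw (\<lambda>y. sym_diff S y) R C"
    by (rule bij_betw_byWitness[where f' = "\<lambda>c. sym_diff S c"]) (use to_C to_R in blast)+
  then have "(\<Sum>y\<in>R. f (sym_diff S y)) = (\<Sum>c\<in>C. f c)"
    by (rule sum.reindex_bij_betw)
  with True to_C show ?thesis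
    by simp
next
  case False
  have "sym_diff S y \<notin> C" if "y \<in> R" for y
  proof
    assume "sym_diff S y \<in> C"
    then obtain w where "w \<in> R" "sym_diff S y = sym_diff w x"
      unfolding C_def by blast
    then have "S = sym_diff (sym_diff w y) x"
      by blast
    with closed[OF \<open>w \<in> R\<close> \<open>y \<in> R\<close>] False show False
      unfolding C_def by blast
  qed
  with False show ?thesis
    by simp
qed

lemma prod_if_mem:
  assumes "S \<subseteq> {..<n}"
  shows "(\<Prod>k<n. if k \<in> S then a else b) = a ^ card S * b ^ (n - card S)"
proof -
  have "{..<n} \<inter> S = S" and "card ({..<n} - S) = n - card S"
    using assms by (auto simp: card_Diff_subset finite_subset)
  then show ?thesis
    by (simp add: prod.If_cases Diff_eq)
qed

definition rz_phase :: "nat \<Rightarrow> real \<Rightarrow> nat set \<Rightarrow> complex" where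
  "rz_phase m \<theta> S = (\<Prod>k<qrm_n m. if k \<in> S then cis (\<theta> / 2) else cis (- \<theta> / 2))"

lemma rz_transversal_eq: "rz_transversal m \<theta> \<psi> S = rz_phase m \<theta> S * \<psi> S"
proof -
  have "exp (\<i> * complex_of_real (\<theta> / 2)) = cis (\<theta> / 2)"
    and "exp (- \<i> * complex_of_real (\<theta> / 2)) = cis (- \<theta> / 2)"
    by (simp_all add: cis_conv_exp)
  then show ?thesis
    unfolding rz_transversal_def rz_phase_def by (simp only:)
qed

lemma rz_phase_sym_diff_full:
  assumes "S \<subseteq> {0..<qrm_n m}"
  shows "rz_phase m \<theta> (sym_diff S {0..<qrm_n m}) = cnj (rz_phase m \<theta> S)"
  unfolding rz_phase_def cnj_prod using assms
  by (intro prod.cong) (auto simp: cis_cnj)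

lemma sum_rz_phase_rm1_short:
  assumes "m \<ge> 1"
  shows "(\<Sum>y\<in>rm1_short m. rz_phase m \<theta> y)
      = cis (\<theta> / 2) * (of_nat (qrm_n m) + cis (- (2 ^ (m - 1) * \<theta>)))"
proof -
  let ?n = "qrm_n m" and ?h = "2 ^ (m - 1) :: nat"
  let ?f = "\<lambda>k. cis (\<theta> / 2) ^ k * cis (- \<theta> / 2) ^ (?n - k)"
  have "?n = 2 * ?h - 1" and "?n - ?h = ?h - 1"
    using assms unfolding qrm_n_def by (cases m; simp)+
  then have "real ?n * (- \<theta> / 2) = \<theta> / 2 + - (2 ^ (m - 1) * \<theta>)"
    and "real ?h * (\<theta> / 2) + real (?n - ?h) * (- \<theta> / 2) = \<theta> / 2"
    by (simp_all add: algebra_simps)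
  then have f0: "?f 0 = cis (\<theta> / 2) * cis (- (2 ^ (m - 1) * \<theta>))" and fh: "?f ?h = cis (\<theta> / 2)"
    by (simp_all only: power_0 mult_1 diff_zero DeMoivre cis_mult)
  have "rz_phase m \<theta> y = ?f (card y)" if "y \<in> rm1_short m" for y
    unfolding rz_phase_def using rm1_short_subset[OF that]
    by (intro prod_if_mem) auto
  then have "(\<Sum>y\<in>rm1_short m. rz_phase m \<theta> y) = (\<Sum>y\<in>rm1_short m. ?f (card y))"
    by (rule sum.cong[OF refl])
  also have "\<dots> = ?f 0 + of_nat ?n * ?f ?h"
    using sum_rm1_short_card[of ?f m] by (simp only: qrm_n_def)
  finally show ?thesis
    unfolding f0 fh by (simp add: algebra_simps)
qed

lemma cnj_eq_cis_arctan_mult: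
  assumes "Re w > 0"
  shows "cnj w = cis (- 2 * arctan (Im w / Re w)) * w"
proof -
  define t where "t = arctan (Im w / Re w)"
  have "cos t \<noteq> 0"
    unfolding t_def by simp
  moreover have "sin t / cos t = Im w / Re w"
    unfolding t_def by (metis tan_arctan tan_def)
  ultimately have "w = of_real (Re w / cos t) * cis t"
    using assms by (simp add: complex_eq_iff field_simps)
  then have "cnj w = cnj (of_real (Re w / cos t) * cis t)"
    by (rule arg_cong)
  also have "\<dots> = of_real (Re w / cos t) * (cis (- 2 * t) * cis t)"
    by (simp add: cis_cnj cis_mult)
  also have "\<dots> = cis (- 2 * t) * w"
    by (subst \<open>w = _\<close>) (simp only: ac_simps)
  finally show ?thesis
    unfolding t_def .
qed

lemma ket0L_eq: "ket0L m S = (if S \<in> rm1_short m then ket0L m {} else 0)"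
  unfolding ket0L_def using empty_in_rm1_short by simp

lemma ket1L_eq:
  "ket1L m S = (if S \<in> (\<lambda>y. sym_diff y {0..<qrm_n m}) ` rm1_short m then ket0L m {} else 0)"
proof -
  have "{y \<union> {0..<qrm_n m} - (y \<inter> {0..<qrm_n m}) | y. y \<in> rm1_short m}
      = (\<lambda>y. sym_diff y {0..<qrm_n m}) ` rm1_short m"
    by blast
  then show ?thesis
    unfolding ket0L_def ket1L_def using empty_in_rm1_short by simp
qed

lemma sum_rz_phase_sym_diff_full:
  "(\<Sum>c\<in>(\<lambda>y. sym_diff y {0..<qrm_n m}) ` rm1_short m. rz_phase m \<theta> c)
     = cnj (\<Sum>y\<in>rm1_short m. rz_phase m \<theta> y)"
proof -
  have "inj_on (\<lambda>y. sym_diff y {0..<qrm_n m}) (rm1_short m)"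
    by (rule inj_onI) blast
  then show ?thesis
    by (simp add: sum.reindex rz_phase_sym_diff_full rm1_short_subset)
qed

lemma Z_generators_even_on_logical_support:
  assumes "m \<ge> 2" "is_Z_generators m hs"
    and "S \<in> rm1_short m \<or> S \<in> (\<lambda>y. sym_diff y {0..<qrm_n m}) ` rm1_short m"
  shows "\<forall>h\<in>set hs. even (card (S \<inter> h))"
proof -
  have "S \<subseteq> {0..<qrm_n m}"
    using assms(3) rm1_short_subset by blast
  moreover have "S \<in> rm1_punct m"
    using assms(3) rm1_short_subset_rm1_punct sym_diff_full_in_rm1_punct[OF assms(1)] by blast
  ultimately show ?thesis
    using assms(2) unfolding is_Z_generators_def by blast
qed

lemma code_proj_rz_transversal:
  fixes \<theta> :: real
  assumes "m \<ge> 2" and X: "is_X_generators m gs" and Z: "is_Z_generators m hs"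
  defines "z \<equiv> \<Sum>y\<in>rm1_short m. rz_phase m \<theta> y"
  shows "code_proj gs hs (rz_transversal m \<theta> (\<lambda>S. \<alpha> * ket0L m S + \<beta> * ket1L m S))
      = (\<lambda>S. (z * \<alpha> * ket0L m S + cnj z * \<beta> * ket1L m S) / 2 ^ m)"
proof
  fix S
  let ?R = "rm1_short m" and ?U = "{0..<qrm_n m}"
  let ?C = "(\<lambda>y. sym_diff y ?U) ` ?R" and ?K = "ket0L m {}"
  have closed: "y \<in> ?R \<Longrightarrow> y' \<in> ?R \<Longrightarrow> sym_diff y y' \<in> ?R" for y y'
    by (rule sym_diff_in_rm1_short)
  have coset_R: "(\<Sum>y\<in>?R. if sym_diff S y \<in> ?R then rz_phase m \<theta> (sym_diff S y) else 0)
      = (if S \<in> ?R then z else 0)"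
    using sum_sym_diff_coset[where x = "{}" and S = S and f = "rz_phase m \<theta>", OF closed]
    by (simp add: z_def)
  have coset_C: "(\<Sum>y\<in>?R. if sym_diff S y \<in> ?C then rz_phase m \<theta> (sym_diff S y) else 0)
      = (if S \<in> ?C then cnj z else 0)"
    using sum_sym_diff_coset[where x = ?U and S = S and f = "rz_phase m \<theta>", OF closed]
    by (simp add: z_def sum_rz_phase_sym_diff_full)
  let ?\<Psi> = "rz_transversal m \<theta> (\<lambda>S. \<alpha> * ket0L m S + \<beta> * ket1L m S)"
  have "?\<Psi> T = \<alpha> * ?K * (if T \<in> ?R then rz_phase m \<theta> T else 0)
      + \<beta> * ?K * (if T \<in> ?C then rz_phase m \<theta> T else 0)" for T
    unfolding rz_transversal_eq ket0L_eq[of m T] ket1L_eq[of m T] by (simp add: algebra_simps)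
  then have "(\<Sum>y\<in>?R. ?\<Psi> (sym_diff S y))
      = \<alpha> * ?K * (if S \<in> ?R then z else 0) + \<beta> * ?K * (if S \<in> ?C then cnj z else 0)"
    by (simp only: sum.distrib sum_distrib_left[symmetric] coset_R coset_C)
  then show "code_proj gs hs ?\<Psi> S = (z * \<alpha> * ket0L m S + cnj z * \<beta> * ket1L m S) / 2 ^ m"
    using Z_generators_even_on_logical_support[OF \<open>m \<ge> 2\<close> Z, of S]
    unfolding code_proj_eq_average[OF X] ket0L_eq[of m S] ket1L_eq[of m S]
    by (auto simp: algebra_simps)
qed

lemma cnj_sum_rz_phase_rm1_short:
  fixes \<phi> :: real
  assumes "m \<ge> 2"
  defines "z \<equiv> \<Sum>y\<in>rm1_short m. rz_phase m (- \<phi>) y"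
  shows "cnj z = exp (\<i> * of_real (\<phi> - 2 * arctan (sin (2 ^ (m - 1) * \<phi>)
      / (real (qrm_n m) + cos (2 ^ (m - 1) * \<phi>))))) * z"
    and "z \<noteq> 0"
proof -
  define w where "w = of_nat (qrm_n m) + cis (2 ^ (m - 1) * \<phi>)"
  define t where "t = arctan (sin (2 ^ (m - 1) * \<phi>) / (real (qrm_n m) + cos (2 ^ (m - 1) * \<phi>)))"
  have z: "z = cis (- \<phi> / 2) * w"
    unfolding z_def w_def using assms(1) by (simp add: sum_rz_phase_rm1_short)
  have "qrm_n m \<ge> 2"
    using assms(1) power_increasing[of 2 m "2::nat"] unfolding qrm_n_def by simp
  then have "real (qrm_n m) + cos (2 ^ (m - 1) * \<phi>) > 0"
    using cos_ge_minus_one[of "2 ^ (m - 1) * \<phi>"] by linarith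
  then have "Re w > 0"
    unfolding w_def by simp
  then have "cnj w = cis (- 2 * t) * w"
    using cnj_eq_cis_arctan_mult[of w] unfolding w_def t_def by simp
  then have "cnj z = cis (\<phi> / 2) * cis (- 2 * t) * w"
    unfolding z by (simp add: cis_cnj)
  also have "cis (\<phi> / 2) * cis (- 2 * t) = cis (\<phi> - 2 * t) * cis (- \<phi> / 2)"
    unfolding cis_mult by (rule arg_cong[where f = cis]) simp
  finally show "cnj z = exp (\<i> * of_real (\<phi> - 2 * arctan (sin (2 ^ (m - 1) * \<phi>)
      / (real (qrm_n m) + cos (2 ^ (m - 1) * \<phi>))))) * z"
    unfolding t_def[symmetric] cis_conv_exp[symmetric] z by (simp only: mult.assoc)
  show "z \<noteq> 0"
    unfolding z using \<open>Re w > 0\<close> by auto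
qed

theorem lemma1:
  fixes m :: nat and \<phi> :: real and b :: "nat \<Rightarrow> bool" and \<alpha> \<beta> :: complex
    and gs hs :: "nat set list"
  assumes "m \<ge> 3"
    and "\<phi> = (\<Sum>k. of_bool (b k) * 2 * pi / 2 ^ (k + 1))"
    and "cmod \<alpha> ^ 2 + cmod \<beta> ^ 2 = 1"
    and "is_X_generators m gs"
    and "is_Z_generators m hs"
  shows "let \<phi>m = 2 ^ (m - 1) * \<phi>;
             \<phi>' = \<phi> - 2 * arctan (sin \<phi>m / (real (qrm_n m) + cos \<phi>m))
         in \<exists>c::complex. c \<noteq> 0 \<and>
              code_proj gs hs (rz_transversal m (- \<phi>) (\<lambda>S. \<alpha> * ket0L m S + \<beta> * ket1L m S))
              = (\<lambda>S. c * (\<alpha> * ket0L m S + exp (\<i> * of_real \<phi>') * \<beta> * ket1L m S))"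
proof -
  have m: "m \<ge> 2"
    using assms(1) by simp
  define z where "z = (\<Sum>y\<in>rm1_short m. rz_phase m (- \<phi>) y)"
  have cnj_z: "cnj z = exp (\<i> * of_real (\<phi> - 2 * arctan (sin (2 ^ (m - 1) * \<phi>)
      / (real (qrm_n m) + cos (2 ^ (m - 1) * \<phi>))))) * z"
    using cnj_sum_rz_phase_rm1_short(1)[OF m] unfolding z_def .
  show ?thesis
    unfolding Let_def
  proof (intro exI conjI)
    show "z / 2 ^ m \<noteq> 0"
      using cnj_sum_rz_phase_rm1_short(2)[OF m] unfolding z_def by simp
    show "code_proj gs hs (rz_transversal m (- \<phi>) (\<lambda>S. \<alpha> * ket0L m S + \<beta> * ket1L m S))
      = (\<lambda>S. z / 2 ^ m * (\<alpha> * ket0L m S + exp (\<i> * of_real (\<phi> - 2 * arctan (sin (2 ^ (m - 1) * \<phi>)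
          / (real (qrm_n m) + cos (2 ^ (m - 1) * \<phi>))))) * \<beta> * ket1L m S))"
      unfolding code_proj_rz_transversal[OF m assms(4,5)] z_def[symmetric] cnj_z
      by (simp add: algebra_simps add_divide_distrib)
  qed
qed

end
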